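(* Let $G$ be a finitely generated group, and let $\mu$ be a symmetric, finitely supported probability measure on $G$ whose support generates $G$ and such that $\mu(e)>0$. Then the sequence $(\mu^{\ast n})_{n=1}^\infty$ measures index uniformly.
   Context: $\mu^{\ast n}$ is the $n$-fold convolution of $\mu$ (the distribution of the $n$th step of the random walk from the identity with step distribution $\mu$); symmetric means $\mu(x)=\mu(x^{-1})$. A sequence $(\mu_n)$ of probability measures measures index uniformly if $\mu_n(xH)\to1/[G:H]$ uniformly over all $x\in G$ and all subgroups $H$ of $G$, with $1/[G:H]=0$ when $H$ has infinite index. *)

theory Defs
  imports "HOL-Algebra.Algebra"
begin

text \<open>A probability measure on a (discrete) group is represented by its mass function
  mu :: 'a => real. We only deal with finitely supported ones.\<close>

definition supp_fn :: "('a, 'b) monoid_scheme \<Rightarrow> ('a \<Rightarrow> real) \<Rightarrow> 'a set" where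
  "supp_fn G f = {g \<in> carrier G. f g \<noteq> 0}"

text \<open>n-fold convolution: distribution of X_n = s_1 s_2 ... s_n with i.i.d. steps s_i ~ mu,
  starting at the identity.\<close>
fun conv_pow :: "('a, 'b) monoid_scheme \<Rightarrow> ('a \<Rightarrow> real) \<Rightarrow> nat \<Rightarrow> 'a \<Rightarrow> real" where
  "conv_pow G mu 0 = (\<lambda>g. if g = \<one>\<^bsub>G\<^esub> then 1 else 0)"
| "conv_pow G mu (Suc n) =
     (\<lambda>g. if g \<in> carrier G
          then (\<Sum>s\<in>supp_fn G mu. conv_pow G mu n (g \<otimes>\<^bsub>G\<^esub> inv\<^bsub>G\<^esub> s) * mu s)
          else 0)"

definition mass :: "('a, 'b) monoid_scheme \<Rightarrow> ('a \<Rightarrow> real) \<Rightarrow> 'a set \<Rightarrow> real" where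
  "mass G f A = (\<Sum>g\<in>supp_fn G f \<inter> A. f g)"

text \<open>1/[G:H], with the convention 1/[G:H] = 0 for infinite index.\<close>
definition inv_index :: "('a, 'b) monoid_scheme \<Rightarrow> 'a set \<Rightarrow> real" where
  "inv_index G H = (if finite (rcosets\<^bsub>G\<^esub> H) then 1 / real (card (rcosets\<^bsub>G\<^esub> H)) else 0)"

definition measures_index_uniformly ::
    "('a, 'b) monoid_scheme \<Rightarrow> (nat \<Rightarrow> 'a \<Rightarrow> real) \<Rightarrow> bool" where
  "measures_index_uniformly G mus \<longleftrightarrow>
     (\<forall>\<epsilon>>0. \<exists>N. \<forall>n\<ge>N. \<forall>x\<in>carrier G. \<forall>H. subgroup H G \<longrightarrow>
        \<bar>mass G (mus n) (x <#\<^bsub>G\<^esub> H) - inv_index G H\<bar> < \<epsilon>)"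

definition finitely_generated_group :: "('a, 'b) monoid_scheme \<Rightarrow> bool" where
  "finitely_generated_group G \<longleftrightarrow>
     (\<exists>S. finite S \<and> S \<subseteq> carrier G \<and> generate G S = carrier G)"

end

theory Submission
  imports Defs
begin

text \<open>
  The mass of \<open>\<mu>\<^sup>*\<^sup>n\<close> on a left coset \<open>x H\<close> is the probability that the walk induced
  on the left cosets of \<open>H\<close>, started at \<open>H\<close>, is at \<open>x H\<close> after \<open>n\<close> steps, and \<open>1/[G:H]\<close>
  is the uniform density on the cosets. The coset walk is symmetric, irreducible and lazy, and its
  holding probability \<open>\<mu>(e)\<close> and smallest step weight do not depend on \<open>H\<close>; it therefore
  suffices to show that such a walk equidistributes at a rate depending on these two constants only.
  For \<open>f = p\<^sub>n(o, -) - u\<close> laziness gives \<open>\<parallel>P f\<parallel>\<^sup>2 \<le> \<parallel>f\<parallel>\<^sup>2 - 2 \<mu>(e) E(f)\<close> for the Dirichlet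
  form \<open>E\<close>, and a Nash-type inequality \<open>E(f) \<ge> c \<parallel>f\<parallel>\<^sup>6\<close>, obtained by following \<open>f\<close> along the
  breadth-first layers around a point where \<open>|f|\<close> is maximal, forces \<open>\<parallel>f\<parallel>\<^sup>2 = O(n\<^sup>-\<^sup>1\<^sup>/\<^sup>3)\<close>.
  By symmetry \<open>p\<^sub>2\<^sub>n(o, c) - u\<close> is the inner product of two such functions.
\<close>

lemma weighted_Cauchy_Schwarz:
  fixes w x :: "'s \<Rightarrow> real"
  assumes "\<And>s. s \<in> A \<Longrightarrow> w s \<ge> 0"
  shows "(\<Sum>s\<in>A. w s * x s)\<^sup>2 \<le> (\<Sum>s\<in>A. w s) * (\<Sum>s\<in>A. w s * (x s)\<^sup>2)"
proof -
  have sq: "(\<Sum>s\<in>A. \<Sum>t\<in>A. w s * w t * (x t)\<^sup>2) = (\<Sum>s\<in>A. w s) * (\<Sum>s\<in>A. w s * (x s)\<^sup>2)"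
    by (simp add: sum_product mult.assoc)
  have "0 \<le> (\<Sum>s\<in>A. \<Sum>t\<in>A. w s * w t * (x s - x t)\<^sup>2)"
    using assms by (intro sum_nonneg mult_nonneg_nonneg) auto
  also have "\<dots> = (\<Sum>s\<in>A. \<Sum>t\<in>A. w s * w t * (x s)\<^sup>2) + (\<Sum>s\<in>A. \<Sum>t\<in>A. w s * w t * (x t)\<^sup>2)
      - 2 * (\<Sum>s\<in>A. \<Sum>t\<in>A. (w s * x s) * (w t * x t))"
    by (simp add: power2_eq_square algebra_simps sum.distrib sum_subtractf sum_distrib_left)
  also have "(\<Sum>s\<in>A. \<Sum>t\<in>A. w s * w t * (x s)\<^sup>2) = (\<Sum>s\<in>A. \<Sum>t\<in>A. w s * w t * (x t)\<^sup>2)"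
    by (subst sum.swap) (simp add: mult.commute)
  finally show ?thesis
    unfolding sq by (simp add: power2_eq_square sum_product)
qed

lemma cubic_decay:
  fixes q :: "nat \<Rightarrow> real"
  assumes decay: "\<And>n. q (Suc n) \<le> q n - \<kappa> * (q n)^3" and nonneg: "\<And>n. q n \<ge> 0"
    and "q 0 \<le> B" "\<kappa> > 0" "\<epsilon> > 0" "real n \<ge> B / (\<kappa> * \<epsilon>^3)"
  shows "q n < \<epsilon>"
proof (rule ccontr)
  assume "\<not> q n < \<epsilon>"
  have "q (Suc k) \<le> q k" for k
  proof -
    have "0 \<le> \<kappa> * (q k)^3" using \<open>\<kappa> > 0\<close> nonneg[of k] by simp
    then show ?thesis using decay[of k] by linarith
  qed
  then have decreasing: "q n \<le> q m" if "m \<le> n" for m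
    using decseq_SucI decseqD that by metis
  have "q m \<le> B - real m * (\<kappa> * \<epsilon>^3)" if "m \<le> n" for m
    using that
  proof (induction m)
    case (Suc m)
    have "\<epsilon>^3 \<le> (q m)^3"
      using decreasing[of m] Suc.prems \<open>\<not> q n < \<epsilon>\<close> \<open>\<epsilon> > 0\<close> by (intro power_mono) auto
    then have "\<kappa> * \<epsilon>^3 \<le> \<kappa> * (q m)^3" using \<open>\<kappa> > 0\<close> by simp
    then show ?case using Suc decay[of m] by (simp add: algebra_simps)
  qed (use \<open>q 0 \<le> B\<close> in simp)
  moreover have "B \<le> real n * (\<kappa> * \<epsilon>^3)"
    using assms(4-6) by (simp add: field_simps)
  ultimately show False using \<open>\<not> q n < \<epsilon>\<close> \<open>\<epsilon> > 0\<close> by fastforce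
qed

section \<open>Symmetric lazy random walks\<close>

text \<open>From \<open>c\<close> the walk moves to \<open>\<phi> s c\<close> with probability \<open>w s\<close>; \<open>\<iota> s\<close> undoes the step \<open>s\<close>
  and has the same weight, which makes the walk symmetric, and \<open>e\<close> is a holding step.\<close>

locale lazy_symmetric_walk =
  fixes V :: "'c set" and S :: "'s set" and w :: "'s \<Rightarrow> real"
    and \<phi> :: "'s \<Rightarrow> 'c \<Rightarrow> 'c" and \<iota> :: "'s \<Rightarrow> 's" and e :: 's
  assumes finite_steps: "finite S"
    and weight_pos: "\<And>s. s \<in> S \<Longrightarrow> w s > 0"
    and weight_sum: "(\<Sum>s\<in>S. w s) = 1"
    and lazy_step: "e \<in> S"
    and act_lazy: "\<And>c. c \<in> V \<Longrightarrow> \<phi> e c = c"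
    and act_closed: "\<And>s c. s \<in> S \<Longrightarrow> c \<in> V \<Longrightarrow> \<phi> s c \<in> V"
    and rev_step: "\<And>s. s \<in> S \<Longrightarrow> \<iota> s \<in> S"
    and rev_rev: "\<And>s. s \<in> S \<Longrightarrow> \<iota> (\<iota> s) = s"
    and weight_rev: "\<And>s. s \<in> S \<Longrightarrow> w (\<iota> s) = w s"
    and act_rev: "\<And>s c. s \<in> S \<Longrightarrow> c \<in> V \<Longrightarrow> \<phi> (\<iota> s) (\<phi> s c) = c"
    and irreducible: "\<And>v B. v \<in> B \<Longrightarrow> B \<subseteq> V \<Longrightarrow> (\<And>s c. s \<in> S \<Longrightarrow> c \<in> B \<Longrightarrow> \<phi> s c \<in> B)
      \<Longrightarrow> V \<subseteq> B"
begin

lemma weight_nonneg: "s \<in> S \<Longrightarrow> w s \<ge> 0"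
  using weight_pos[of s] by simp

lemma act_act_rev: "s \<in> S \<Longrightarrow> c \<in> V \<Longrightarrow> \<phi> s (\<phi> (\<iota> s) c) = c"
  using act_rev[of "\<iota> s" c] rev_rev[of s] rev_step[of s] by simp

definition supp :: "('c \<Rightarrow> real) \<Rightarrow> 'c set" where
  "supp f = {c \<in> V. f c \<noteq> 0}"

definition finsupp :: "('c \<Rightarrow> real) \<Rightarrow> bool" where
  "finsupp f \<longleftrightarrow> finite (supp f)"

definition total :: "('c \<Rightarrow> real) \<Rightarrow> real" where
  "total f = sum f (supp f)"

lemma total_eq_sum:
  assumes "finite A" "A \<subseteq> V" "\<And>c. c \<in> V \<Longrightarrow> c \<notin> A \<Longrightarrow> f c = 0"
  shows "total f = sum f A"
  unfolding total_def by (rule sum.mono_neutral_left) (use assms in \<open>auto simp: supp_def\<close>)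

lemma total_eq_sum_finite: "finite V \<Longrightarrow> total f = sum f V"
  by (rule total_eq_sum) auto

lemma total_cong: "(\<And>c. c \<in> V \<Longrightarrow> f c = g c) \<Longrightarrow> total f = total g"
  unfolding total_def supp_def by (rule sum.cong) auto

lemma finsupp_subset: "finsupp f \<Longrightarrow> (\<And>c. c \<in> V \<Longrightarrow> f c = 0 \<Longrightarrow> g c = 0) \<Longrightarrow> finsupp g"
  unfolding finsupp_def supp_def by (erule rev_finite_subset) auto

lemma finsupp_finite: "finite V \<Longrightarrow> finsupp f"
  unfolding finsupp_def supp_def by simp

lemma finsupp_binop:
  assumes "finsupp f" "finsupp g" "\<And>c. h c = op (f c) (g c)" "op 0 0 = 0"
  shows "finsupp h"
proof -
  have "supp h \<subseteq> supp f \<union> supp g"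
    using assms(3,4) unfolding supp_def by auto
  then show ?thesis
    using assms(1,2) unfolding finsupp_def by (meson finite_Un finite_subset)
qed

lemma finsupp_add: "finsupp f \<Longrightarrow> finsupp g \<Longrightarrow> finsupp (\<lambda>c. f c + g c)"
  by (rule finsupp_binop[where op = "(+)"]) auto

lemma finsupp_diff: "finsupp f \<Longrightarrow> finsupp g \<Longrightarrow> finsupp (\<lambda>c. f c - g c)"
  by (rule finsupp_binop[where op = "(-)"]) auto

lemma finsupp_mult_left: "finsupp f \<Longrightarrow> finsupp (\<lambda>c. g c * f c)"
  by (erule finsupp_subset) simp

lemma finsupp_mult_right: "finsupp f \<Longrightarrow> finsupp (\<lambda>c. f c * g c)"
  by (erule finsupp_subset) simp

lemma finsupp_abs: "finsupp f \<Longrightarrow> finsupp (\<lambda>c. \<bar>f c\<bar>)"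
  by (erule finsupp_subset) simp

lemma finsupp_power2: "finsupp f \<Longrightarrow> finsupp (\<lambda>c. (f c)\<^sup>2)"
  by (erule finsupp_subset) simp

lemma finsupp_sum: "(\<And>i. i \<in> I \<Longrightarrow> finsupp (h i)) \<Longrightarrow> finsupp (\<lambda>c. \<Sum>i\<in>I. h i c)"
  by (induction I rule: infinite_finite_induct)
    (auto simp: finsupp_def supp_def intro: finsupp_add[unfolded finsupp_def supp_def])

lemma finsupp_act:
  assumes "s \<in> S" "finsupp f"
  shows "finsupp (\<lambda>c. f (\<phi> s c))"
proof -
  have "supp (\<lambda>c. f (\<phi> s c)) \<subseteq> \<phi> (\<iota> s) ` supp f"
    using assms(1) act_closed act_rev by (force simp: supp_def)
  then show ?thesis
    using assms(2) unfolding finsupp_def by (meson finite_imageI finite_subset)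
qed

lemma total_add: "finsupp f \<Longrightarrow> finsupp g \<Longrightarrow> total (\<lambda>c. f c + g c) = total f + total g"
  unfolding finsupp_def
  by (subst (1 2 3) total_eq_sum[of "supp f \<union> supp g"]) (auto simp: supp_def sum.distrib)

lemma total_diff: "finsupp f \<Longrightarrow> finsupp g \<Longrightarrow> total (\<lambda>c. f c - g c) = total f - total g"
  unfolding finsupp_def
  by (subst (1 2 3) total_eq_sum[of "supp f \<union> supp g"]) (auto simp: supp_def sum_subtractf)

lemma total_mono:
  "finsupp f \<Longrightarrow> finsupp g \<Longrightarrow> (\<And>c. c \<in> V \<Longrightarrow> f c \<le> g c) \<Longrightarrow> total f \<le> total g"
  unfolding finsupp_def
  by (subst (1 2) total_eq_sum[of "supp f \<union> supp g"]) (auto simp: supp_def intro: sum_mono)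

lemma total_cmult: "total (\<lambda>c. k * f c) = k * total f"
proof (cases "k = 0")
  case False
  then have "supp (\<lambda>c. k * f c) = supp f" by (auto simp: supp_def)
  then show ?thesis by (simp add: total_def sum_distrib_left)
qed (simp add: total_def supp_def)

lemma total_sum:
  "finite I \<Longrightarrow> (\<And>i. i \<in> I \<Longrightarrow> finsupp (h i)) \<Longrightarrow> total (\<lambda>c. \<Sum>i\<in>I. h i c) = (\<Sum>i\<in>I. total (h i))"
proof (induction I rule: finite_induct)
  case empty
  then show ?case by (simp add: total_def supp_def)
next
  case insert
  then show ?case by (simp add: total_add finsupp_sum)
qed

lemma total_weighted:
  "finite I \<Longrightarrow> (\<And>i. i \<in> I \<Longrightarrow> finsupp (h i))
    \<Longrightarrow> total (\<lambda>c. \<Sum>i\<in>I. k i * h i c) = (\<Sum>i\<in>I. k i * total (h i))"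
  by (simp add: total_sum total_cmult finsupp_mult_left)

lemma total_nonneg: "(\<And>c. c \<in> V \<Longrightarrow> f c \<ge> 0) \<Longrightarrow> total f \<ge> 0"
  unfolding total_def supp_def by (rule sum_nonneg) auto

lemma sum_le_total:
  assumes "finsupp f" "\<And>c. c \<in> V \<Longrightarrow> f c \<ge> 0" "finite A" "A \<subseteq> V"
  shows "sum f A \<le> total f"
proof -
  have "sum f A \<le> sum f (A \<union> supp f)"
    using assms by (intro sum_mono2) (auto simp: finsupp_def supp_def)
  also have "\<dots> = total f"
    using assms by (intro total_eq_sum[symmetric]) (auto simp: finsupp_def supp_def)
  finally show ?thesis .
qed

lemma abs_total_le: "\<bar>total f\<bar> \<le> total (\<lambda>c. \<bar>f c\<bar>)"
proof -
  have "supp (\<lambda>c. \<bar>f c\<bar>) = supp f" by (auto simp: supp_def)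
  then show ?thesis by (simp add: total_def sum_abs)
qed

lemma total_act:
  assumes "s \<in> S" "finsupp f"
  shows "total (\<lambda>c. f (\<phi> s c)) = total f"
proof -
  have bij: "bij_betw (\<phi> s) (supp (\<lambda>c. f (\<phi> s c))) (supp f)"
    by (rule bij_betw_byWitness[where f' = "\<phi> (\<iota> s)"])
      (use assms(1) act_closed act_rev act_act_rev rev_step in \<open>force simp: supp_def\<close>)+
  show ?thesis
    unfolding total_def using sum.reindex_bij_betw[OF bij] by simp
qed

lemmas finsupp_intros =
  finsupp_add finsupp_diff finsupp_mult_left finsupp_mult_right finsupp_abs finsupp_power2
  finsupp_sum finsupp_act

subsection \<open>The Markov operator and the Dirichlet form\<close>

definition markov :: "('c \<Rightarrow> real) \<Rightarrow> 'c \<Rightarrow> real" where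
  "markov f c = (\<Sum>s\<in>S. w s * f (\<phi> s c))"

definition dot :: "('c \<Rightarrow> real) \<Rightarrow> ('c \<Rightarrow> real) \<Rightarrow> real" where
  "dot f g = total (\<lambda>c. f c * g c)"

definition sqnorm :: "('c \<Rightarrow> real) \<Rightarrow> real" where
  "sqnorm f = total (\<lambda>c. (f c)\<^sup>2)"

definition dirichlet :: "('c \<Rightarrow> real) \<Rightarrow> real" where
  "dirichlet f = total (\<lambda>c. \<Sum>s\<in>S. w s * (f (\<phi> s c) - f c)\<^sup>2) / 2"

lemma finsupp_markov: "finsupp f \<Longrightarrow> finsupp (markov f)"
  unfolding markov_def by (intro finsupp_intros) auto

lemma markov_diff_const: "c \<in> V \<Longrightarrow> markov (\<lambda>c. f c - u) c = markov f c - u"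
  by (simp add: markov_def right_diff_distrib sum_subtractf weight_sum flip: sum_distrib_right)

lemma markov_nonneg: "(\<And>c. c \<in> V \<Longrightarrow> f c \<ge> 0) \<Longrightarrow> c \<in> V \<Longrightarrow> markov f c \<ge> 0"
  unfolding markov_def by (intro sum_nonneg mult_nonneg_nonneg weight_nonneg) (auto simp: act_closed)

lemma total_markov: "finsupp f \<Longrightarrow> total (markov f) = total f"
  unfolding markov_def by (simp add: total_sum total_cmult total_act finsupp_intros finite_steps
      weight_sum flip: sum_distrib_right)

lemma dot_commute: "dot f g = dot g f"
  unfolding dot_def by (simp add: mult.commute)

lemma dot_markov:
  assumes "finsupp f" "finsupp g"
  shows "dot (markov f) g = dot f (markov g)"
proof -
  have "dot (markov f) g = total (\<lambda>c. \<Sum>s\<in>S. w s * (f (\<phi> s c) * g c))"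
    unfolding dot_def markov_def by (simp add: sum_distrib_right mult.assoc)
  also have "\<dots> = (\<Sum>s\<in>S. w s * total (\<lambda>c. f (\<phi> s c) * g c))"
    using assms by (intro total_weighted finsupp_intros finite_steps)
  also have "\<dots> = (\<Sum>s\<in>S. w (\<iota> s) * total (\<lambda>d. f d * g (\<phi> (\<iota> s) d)))"
  proof (intro sum.cong refl)
    fix s assume s: "s \<in> S"
    have "total (\<lambda>c. f (\<phi> s c) * g c) = total (\<lambda>d. f (\<phi> s (\<phi> (\<iota> s) d)) * g (\<phi> (\<iota> s) d))"
      using total_act[of "\<iota> s" "\<lambda>c. f (\<phi> s c) * g c"] s assms by (simp add: finsupp_intros rev_step)
    also have "\<dots> = total (\<lambda>d. f d * g (\<phi> (\<iota> s) d))"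
      by (rule total_cong) (simp add: act_act_rev s)
    finally show "w s * total (\<lambda>c. f (\<phi> s c) * g c) = w (\<iota> s) * total (\<lambda>d. f d * g (\<phi> (\<iota> s) d))"
      by (simp add: weight_rev s)
  qed
  also have "\<dots> = (\<Sum>s\<in>S. w s * total (\<lambda>d. f d * g (\<phi> s d)))"
    by (rule sum.reindex_bij_witness[of S \<iota> \<iota>]) (auto simp: rev_step rev_rev)
  also have "\<dots> = total (\<lambda>c. \<Sum>s\<in>S. w s * (f c * g (\<phi> s c)))"
    using assms by (intro total_weighted[symmetric] finsupp_intros finite_steps)
  also have "\<dots> = dot f (markov g)"
    unfolding dot_def markov_def by (simp add: sum_distrib_left mult.left_commute)
  finally show ?thesis .
qed

lemma dirichlet_nonneg: "dirichlet f \<ge> 0"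
  unfolding dirichlet_def
  by (intro divide_nonneg_pos total_nonneg sum_nonneg mult_nonneg_nonneg weight_nonneg) auto

lemma dirichlet_uminus: "dirichlet (\<lambda>c. - f c) = dirichlet f"
  unfolding dirichlet_def by (simp add: power2_commute)

lemma dirichlet_eq:
  assumes "finsupp f"
  shows "dirichlet f = sqnorm f - dot f (markov f)"
proof -
  have "total (\<lambda>c. (f (\<phi> s c) - f c)\<^sup>2) = 2 * sqnorm f - 2 * total (\<lambda>c. f (\<phi> s c) * f c)"
    if s: "s \<in> S" for s
  proof -
    have "total (\<lambda>c. (f (\<phi> s c) - f c)\<^sup>2)
        = total (\<lambda>c. ((f (\<phi> s c))\<^sup>2 + (f c)\<^sup>2) - 2 * (f (\<phi> s c) * f c))"
      by (rule total_cong) (simp add: power2_eq_square algebra_simps)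
    also have "\<dots> = total (\<lambda>c. (f (\<phi> s c))\<^sup>2) + sqnorm f - 2 * total (\<lambda>c. f (\<phi> s c) * f c)"
      using s assms unfolding sqnorm_def by (simp add: total_diff total_add finsupp_intros total_cmult)
    also have "total (\<lambda>c. (f (\<phi> s c))\<^sup>2) = sqnorm f"
      unfolding sqnorm_def using total_act[of s "\<lambda>c. (f c)\<^sup>2"] s assms by (simp add: finsupp_intros)
    finally show ?thesis by simp
  qed
  then have "2 * dirichlet f = (\<Sum>s\<in>S. w s * (2 * sqnorm f - 2 * total (\<lambda>c. f (\<phi> s c) * f c)))"
    unfolding dirichlet_def using assms by (simp add: total_weighted finsupp_intros finite_steps)
  also have "\<dots> = 2 * sqnorm f - 2 * (\<Sum>s\<in>S. w s * total (\<lambda>c. f (\<phi> s c) * f c))"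
    by (simp add: right_diff_distrib sum_subtractf weight_sum sum_distrib_left mult.left_commute
        flip: sum_distrib_right)
  also have "(\<Sum>s\<in>S. w s * total (\<lambda>c. f (\<phi> s c) * f c)) = dot (markov f) f"
    unfolding dot_def markov_def using assms
    by (simp add: sum_distrib_right mult.assoc total_weighted finsupp_intros finite_steps)
  finally show ?thesis by (simp add: dot_commute)
qed

lemma sqnorm_nonneg: "sqnorm f \<ge> 0"
  unfolding sqnorm_def by (rule total_nonneg) simp

lemma sqnorm_le_sup_mult_total_abs:
  assumes "finsupp f" "\<And>c. c \<in> V \<Longrightarrow> \<bar>f c\<bar> \<le> M"
  shows "sqnorm f \<le> M * total (\<lambda>c. \<bar>f c\<bar>)"
  unfolding sqnorm_def total_cmult[symmetric]
proof (rule total_mono)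
  show "(f c)\<^sup>2 \<le> M * \<bar>f c\<bar>" if "c \<in> V" for c
  proof -
    have "(f c)\<^sup>2 = \<bar>f c\<bar> * \<bar>f c\<bar>" by (simp add: power2_eq_square)
    also have "\<dots> \<le> M * \<bar>f c\<bar>" using assms(2)[OF that] by (rule mult_right_mono) simp
    finally show ?thesis .
  qed
qed (use finsupp_power2[OF assms(1)] finsupp_mult_left[OF finsupp_abs[OF assms(1)]] in auto)

lemma sqnorm_moving_part:
  assumes "finsupp f"
  shows "sqnorm (\<lambda>c. \<Sum>s\<in>S - {e}. w s * f (\<phi> s c)) \<le> (1 - w e)\<^sup>2 * sqnorm f"
proof -
  have moving_weight: "(\<Sum>s\<in>S - {e}. w s) = 1 - w e"
    using weight_sum lazy_step finite_steps by (simp add: sum_diff1)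
  have "sqnorm (\<lambda>c. \<Sum>s\<in>S - {e}. w s * f (\<phi> s c))
      \<le> total (\<lambda>c. (1 - w e) * (\<Sum>s\<in>S - {e}. w s * (f (\<phi> s c))\<^sup>2))"
    unfolding sqnorm_def
  proof (rule total_mono)
    fix c
    show "(\<Sum>s\<in>S - {e}. w s * f (\<phi> s c))\<^sup>2 \<le> (1 - w e) * (\<Sum>s\<in>S - {e}. w s * (f (\<phi> s c))\<^sup>2)"
      using weighted_Cauchy_Schwarz[of "S - {e}" w] weight_nonneg moving_weight by simp
  qed (use assms in \<open>intro finsupp_intros; auto\<close>)+
  also have "\<dots> = (1 - w e) * (\<Sum>s\<in>S - {e}. w s * total (\<lambda>c. (f (\<phi> s c))\<^sup>2))"
    unfolding total_cmult using assms finite_steps by (subst total_weighted) (auto intro: finsupp_intros)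
  also have "\<dots> = (1 - w e) * (\<Sum>s\<in>S - {e}. w s * sqnorm f)"
    unfolding sqnorm_def using assms total_act[of _ "\<lambda>c. (f c)\<^sup>2"] by (simp add: finsupp_power2)
  also have "\<dots> = (1 - w e)\<^sup>2 * sqnorm f"
    by (simp add: moving_weight power2_eq_square flip: sum_distrib_right)
  finally show ?thesis .
qed

lemma sqnorm_markov_le:
  assumes "finsupp f"
  shows "sqnorm (markov f) \<le> sqnorm f - 2 * w e * dirichlet f"
proof -
  define a where "a = w e"
  define h where "h = (\<lambda>c. \<Sum>s\<in>S - {e}. w s * f (\<phi> s c))"
  have finsupp_h: "finsupp h"
    unfolding h_def using assms by (intro finsupp_intros) auto
  have split: "markov f c = a * f c + h c" if "c \<in> V" for c
    unfolding markov_def h_def a_def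
    using that lazy_step finite_steps act_lazy by (simp add: sum.remove)
  have "sqnorm (markov f) = total (\<lambda>c. a\<^sup>2 * (f c)\<^sup>2 + 2 * a * (f c * h c) + (h c)\<^sup>2)"
    unfolding sqnorm_def by (rule total_cong) (simp add: split power2_eq_square algebra_simps)
  also have "\<dots> = a\<^sup>2 * sqnorm f + 2 * a * dot f h + sqnorm h"
    unfolding sqnorm_def dot_def using assms finsupp_h
    by (simp add: total_add total_cmult finsupp_intros)
  finally have sqnorm_split: "sqnorm (markov f) = a\<^sup>2 * sqnorm f + 2 * a * dot f h + sqnorm h" .
  have "dot f (markov f) = total (\<lambda>c. a * (f c)\<^sup>2 + f c * h c)"
    unfolding dot_def by (rule total_cong) (simp add: split power2_eq_square algebra_simps)
  also have "\<dots> = a * sqnorm f + dot f h"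
    unfolding sqnorm_def dot_def using assms finsupp_h
    by (simp add: total_add total_cmult finsupp_intros)
  finally have dot_split: "dot f (markov f) = a * sqnorm f + dot f h" .
  have "sqnorm h \<le> (1 - a)\<^sup>2 * sqnorm f"
    unfolding h_def a_def by (rule sqnorm_moving_part[OF assms])
  moreover have "a\<^sup>2 * sqnorm f + 2 * a * dot f h + (1 - a)\<^sup>2 * sqnorm f
      = sqnorm f - 2 * a * (sqnorm f - dot f (markov f))"
    unfolding dot_split by (simp add: power2_eq_square algebra_simps)
  ultimately show ?thesis
    unfolding sqnorm_split dirichlet_eq[OF assms] a_def by linarith
qed

subsection \<open>A Nash-type inequality\<close>

definition w_min :: real where
  "w_min = Min (w ` S)"

lemma w_min_le: "s \<in> S \<Longrightarrow> w_min \<le> w s"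
  unfolding w_min_def using finite_steps by simp

lemma w_min_pos: "w_min > 0"
  unfolding w_min_def using finite_steps lazy_step weight_pos by (subst Min_gr_iff) auto

fun reach :: "'c \<Rightarrow> nat \<Rightarrow> 'c set" where
  "reach v 0 = {v}"
| "reach v (Suc k) = reach v k \<union> (\<Union>s\<in>S. \<phi> s ` reach v k)"

fun layer :: "'c \<Rightarrow> nat \<Rightarrow> 'c set" where
  "layer v 0 = {v}"
| "layer v (Suc j) = reach v (Suc j) - reach v j"

definition osc :: "('c \<Rightarrow> real) \<Rightarrow> 'c \<Rightarrow> nat \<Rightarrow> real" where
  "osc g v j = Max (insert 0 ((\<lambda>(p, s). \<bar>g (\<phi> s p) - g p\<bar>) ` (layer v j \<times> S)))"

lemma finite_reach: "finite (reach v k)"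
  by (induction k) (auto simp: finite_steps)

lemma reach_subset: "v \<in> V \<Longrightarrow> reach v k \<subseteq> V"
  by (induction k) (auto simp: act_closed)

lemma reach_mono: "j \<le> k \<Longrightarrow> reach v j \<subseteq> reach v k"
  by (induction k) (auto simp: le_Suc_eq)

lemma center_in_reach: "v \<in> reach v k"
  using reach_mono[of 0 k v] by auto

lemma layer_subset_reach: "layer v j \<subseteq> reach v j"
  by (cases j) auto

lemma finite_layer: "finite (layer v j)"
  using layer_subset_reach finite_reach by (rule finite_subset)

lemma disjoint_layers: "i \<noteq> j \<Longrightarrow> layer v i \<inter> layer v j = {}"
proof (induction i j rule: linorder_wlog)
  case (le i j)
  then obtain j' where j: "j = Suc j'" "i \<le> j'"
    by (cases j) auto
  then have "layer v i \<subseteq> reach v j'"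
    using layer_subset_reach reach_mono by blast
  then show ?case using j by auto
qed auto

lemma abs_diff_le_osc: "p \<in> layer v j \<Longrightarrow> s \<in> S \<Longrightarrow> \<bar>g (\<phi> s p) - g p\<bar> \<le> osc g v j"
  unfolding osc_def using finite_layer finite_steps by (intro Max_ge) force+

lemma osc_nonneg: "0 \<le> osc g v j"
  unfolding osc_def using finite_layer finite_steps by (intro Max_ge) auto

lemma osc_squared_le: "(osc g v j)\<^sup>2 \<le> (\<Sum>p\<in>layer v j. \<Sum>s\<in>S. (g (\<phi> s p) - g p)\<^sup>2)"
proof -
  have "osc g v j \<in> insert 0 ((\<lambda>(p, s). \<bar>g (\<phi> s p) - g p\<bar>) ` (layer v j \<times> S))"
    unfolding osc_def using finite_layer finite_steps by (intro Max_in) auto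
  then consider "osc g v j = 0" | p s where "p \<in> layer v j" "s \<in> S" "osc g v j = \<bar>g (\<phi> s p) - g p\<bar>"
    by auto
  then show ?thesis
  proof cases
    case 2
    then have "(osc g v j)\<^sup>2 \<le> (\<Sum>s\<in>S. (g (\<phi> s p) - g p)\<^sup>2)"
      using finite_steps by (simp add: member_le_sum[where f = "\<lambda>s. (g (\<phi> s p) - g p)\<^sup>2"])
    also have "\<dots> \<le> (\<Sum>p\<in>layer v j. \<Sum>s\<in>S. (g (\<phi> s p) - g p)\<^sup>2)"
      using 2 finite_layer by (intro member_le_sum) (auto intro: sum_nonneg)
    finally show ?thesis .
  qed (simp add: sum_nonneg)
qed

text \<open>A step leaving \<open>reach v j\<close> starts in \<open>layer v j\<close>, so it changes \<open>g\<close> by at most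
  \<open>osc g v j\<close>.\<close>

lemma reach_lower_bound: "c \<in> reach v j \<Longrightarrow> g v - (\<Sum>i<j. osc g v i) \<le> g c"
proof (induction j arbitrary: c)
  case (Suc j)
  show ?case
  proof (cases "c \<in> reach v j")
    case True
    then show ?thesis using Suc.IH osc_nonneg[of g v j] by fastforce
  next
    case False
    then obtain s p where sp: "s \<in> S" "p \<in> reach v j" "c = \<phi> s p"
      using Suc.prems by auto
    have "p \<in> layer v j"
    proof (cases j)
      case (Suc j')
      then have "p \<notin> reach v j'" using False sp by auto
      then show ?thesis using sp Suc by simp
    qed (use sp in simp)
    then have "\<bar>g c - g p\<bar> \<le> osc g v j" using abs_diff_le_osc sp by simp
    then show ?thesis using Suc.IH[OF sp(2)] by simp
  qed
qed simp

lemma card_reach: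
  "(\<And>j. j < k \<Longrightarrow> reach v j \<noteq> reach v (Suc j)) \<Longrightarrow> card (reach v k) \<ge> k + 1"
proof (induction k)
  case (Suc k)
  then have "reach v k \<subset> reach v (Suc k)" by auto
  then have "card (reach v k) < card (reach v (Suc k))" by (rule psubset_card_mono[OF finite_reach])
  then show ?case using Suc by simp
qed simp

lemma reach_stable:
  assumes "v \<in> V" "reach v (Suc j) = reach v j" "j \<le> k"
  shows "reach v k = V"
proof -
  have "V \<subseteq> reach v j"
  proof (rule irreducible[OF center_in_reach reach_subset[OF assms(1)]])
    fix s c assume "s \<in> S" "c \<in> reach v j"
    then have "\<phi> s c \<in> reach v (Suc j)" by auto
    then show "\<phi> s c \<in> reach v j" using assms(2) by blast
  qed
  then show ?thesis using reach_mono[OF assms(3)] reach_subset[OF assms(1)] by blast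
qed

lemma sum_osc_squared_le:
  assumes "v \<in> V" "finsupp g"
  shows "(\<Sum>i<k. (osc g v i)\<^sup>2) \<le> 2 * dirichlet g / w_min"
proof -
  define edge where "edge = (\<lambda>p. \<Sum>s\<in>S. w s * (g (\<phi> s p) - g p)\<^sup>2)"
  define L where "L = (\<Union>i<k. layer v i)"
  have edge_ge: "(\<Sum>s\<in>S. (g (\<phi> s p) - g p)\<^sup>2) \<le> edge p / w_min" for p
  proof -
    have "(g (\<phi> s p) - g p)\<^sup>2 \<le> w s / w_min * (g (\<phi> s p) - g p)\<^sup>2" if "s \<in> S" for s
    proof -
      have "w_min * (g (\<phi> s p) - g p)\<^sup>2 \<le> w s * (g (\<phi> s p) - g p)\<^sup>2"
        using w_min_le[OF that] by (rule mult_right_mono) simp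
      then show ?thesis using w_min_pos by (simp add: field_simps)
    qed
    then have "(\<Sum>s\<in>S. (g (\<phi> s p) - g p)\<^sup>2) \<le> (\<Sum>s\<in>S. w s / w_min * (g (\<phi> s p) - g p)\<^sup>2)"
      by (rule sum_mono)
    then show ?thesis by (simp add: edge_def sum_divide_distrib)
  qed
  have finsupp_edge: "finsupp edge"
    unfolding edge_def using assms(2) by (intro finsupp_sum finsupp_mult_left finsupp_power2
        finsupp_diff finsupp_act)
  have L: "finite L" "L \<subseteq> V"
    unfolding L_def using layer_subset_reach reach_subset[OF assms(1)] by (auto simp: finite_layer, blast)
  have "(\<Sum>i<k. (osc g v i)\<^sup>2) \<le> (\<Sum>i<k. \<Sum>p\<in>layer v i. \<Sum>s\<in>S. (g (\<phi> s p) - g p)\<^sup>2)"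
    by (intro sum_mono osc_squared_le)
  also have "\<dots> = (\<Sum>p\<in>L. \<Sum>s\<in>S. (g (\<phi> s p) - g p)\<^sup>2)"
    unfolding L_def by (rule sum.UNION_disjoint[symmetric]) (auto simp: finite_layer disjoint_layers)
  also have "\<dots> \<le> (\<Sum>p\<in>L. edge p / w_min)"
    by (rule sum_mono) (rule edge_ge)
  also have "\<dots> = (\<Sum>p\<in>L. edge p) / w_min"
    by (simp add: sum_divide_distrib)
  also have "(\<Sum>p\<in>L. edge p) \<le> total edge"
    using finsupp_edge L unfolding edge_def
    by (intro sum_le_total) (auto intro!: sum_nonneg mult_nonneg_nonneg weight_nonneg)
  finally show ?thesis
    using w_min_pos by (simp add: edge_def dirichlet_def divide_right_mono)
qed

text \<open>Either \<open>g\<close> drops from \<open>g v\<close> to \<open>g v / 2\<close> within \<open>k\<close> layers, or it stays above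
  \<open>g v / 2\<close> on the whole ball of radius \<open>k\<close>; the latter is ruled out by the \<open>\<ell>\<^sup>1\<close> bound if the
  ball keeps growing, and by \<open>total g = 0\<close> if it exhausts \<open>V\<close>.\<close>

lemma sum_osc_ge:
  assumes "v \<in> V" "finsupp g" "total (\<lambda>c. \<bar>g c\<bar>) \<le> 2" "finite V \<Longrightarrow> total g = 0"
    and "g v > 0" "real k * g v \<ge> 4"
  shows "g v / 2 \<le> (\<Sum>i<k. osc g v i)"
proof (rule ccontr)
  assume "\<not> ?thesis"
  then have big: "g c > g v / 2" if "c \<in> reach v k" for c
    using reach_lower_bound[OF that, of g] by linarith
  show False
  proof (cases "\<exists>j<k. reach v (Suc j) = reach v j")
    case True
    then have V: "reach v k = V" using reach_stable[OF assms(1)] by (meson less_imp_le)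
    have "0 < sum g (reach v k)"
    proof (rule sum_pos[OF finite_reach])
      show "reach v k \<noteq> {}" using center_in_reach[of v k] by blast
      show "0 < g c" if "c \<in> reach v k" for c using big[OF that] assms(5) by linarith
    qed
    also have "\<dots> = total g"
      using V finite_reach[of v k] by (simp add: total_eq_sum_finite)
    finally show False using assms(4) V finite_reach[of v k] by simp
  next
    case False
    then have "real k + 1 \<le> real (card (reach v k))"
      using card_reach[of k v] by fastforce
    then have "(real k + 1) * (g v / 2) \<le> (\<Sum>c\<in>reach v k. g v / 2)"
      using assms(5) by (simp add: mult_right_mono)
    also have "\<dots> < sum g (reach v k)"
      using big center_in_reach by (intro sum_strict_mono finite_reach) auto
    also have "\<dots> \<le> sum (\<lambda>c. \<bar>g c\<bar>) (reach v k)" by (intro sum_mono) simp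
    also have "\<dots> \<le> total (\<lambda>c. \<bar>g c\<bar>)"
      using assms(1,2) by (intro sum_le_total finsupp_abs finite_reach reach_subset) auto
    finally show False using assms(3,5,6) by (simp add: algebra_simps)
  qed
qed

lemma dirichlet_ge_at_point:
  assumes "v \<in> V" "finsupp g" "total (\<lambda>c. \<bar>g c\<bar>) \<le> 2" "finite V \<Longrightarrow> total g = 0"
    and "0 < g v" "g v \<le> 1"
  shows "w_min * (g v)^3 / 40 \<le> dirichlet g"
proof -
  define M where "M = g v"
  define k where "k = nat \<lceil>4 / M\<rceil>"
  have M: "0 < M" "M \<le> 1" using assms(5,6) by (auto simp: M_def)
  have kM: "4 \<le> real k * M" "real k * M \<le> 5"
  proof -
    have "4 / M \<le> real k" "real k \<le> 4 / M + 1"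
      unfolding k_def using M ceiling_correct[of "4 / M"] by (simp_all add: of_nat_nat)
    then show "4 \<le> real k * M" "real k * M \<le> 5"
      using M by (simp_all add: field_simps)
  qed
  have "(M / 2)\<^sup>2 \<le> (\<Sum>i<k. osc g v i)\<^sup>2"
    using sum_osc_ge[OF assms(1-5)] kM M by (intro power_mono) (auto simp: M_def)
  also have "\<dots> \<le> real k * (\<Sum>i<k. (osc g v i)\<^sup>2)"
    using weighted_Cauchy_Schwarz[of "{..<k}" "\<lambda>_. 1" "osc g v"] by simp
  also have "\<dots> \<le> real k * (2 * dirichlet g / w_min)"
    by (intro mult_left_mono sum_osc_squared_le assms) simp
  finally have "M\<^sup>2 * w_min \<le> 8 * real k * dirichlet g"
    using w_min_pos by (simp add: field_simps power2_eq_square)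
  then have "M ^ 3 * w_min \<le> 8 * (real k * M) * dirichlet g"
    using M by (simp add: power3_eq_cube power2_eq_square mult_left_mono algebra_simps)
  also have "\<dots> \<le> 8 * 5 * dirichlet g"
    using kM dirichlet_nonneg[of g] by (intro mult_right_mono) (auto simp: mult.commute)
  finally show ?thesis unfolding M_def by (simp add: mult.commute)
qed

lemma finsupp_abs_max:
  assumes "finsupp g" "supp g \<noteq> {}"
  obtains v where "v \<in> supp g" "\<And>c. c \<in> V \<Longrightarrow> \<bar>g c\<bar> \<le> \<bar>g v\<bar>"
proof -
  have fin: "finite (supp g)" using assms(1) by (simp add: finsupp_def)
  have "Max ((\<lambda>c. \<bar>g c\<bar>) ` supp g) \<in> (\<lambda>c. \<bar>g c\<bar>) ` supp g"
    using fin assms(2) by (intro Max_in) auto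
  then obtain v where v: "v \<in> supp g" "\<bar>g v\<bar> = Max ((\<lambda>c. \<bar>g c\<bar>) ` supp g)"
    by auto
  have "\<bar>g c\<bar> \<le> \<bar>g v\<bar>" if "c \<in> V" for c
  proof (cases "c \<in> supp g")
    case True
    then show ?thesis unfolding v(2) using fin by (intro Max_ge) auto
  qed (use that in \<open>simp add: supp_def\<close>)
  with v(1) show thesis by (rule that)
qed

lemma nash_inequality:
  assumes "finsupp g" "total (\<lambda>c. \<bar>g c\<bar>) \<le> 2" "\<And>c. c \<in> V \<Longrightarrow> \<bar>g c\<bar> \<le> 1"
    and "finite V \<Longrightarrow> total g = 0"
  shows "w_min * (sqnorm g)^3 / 320 \<le> dirichlet g"
proof (cases "supp g = {}")
  case True
  then have "sqnorm g = 0" unfolding sqnorm_def total_def supp_def by auto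
  then show ?thesis using dirichlet_nonneg[of g] by simp
next
  case False
  obtain v where v: "v \<in> supp g" and le_M: "\<And>c. c \<in> V \<Longrightarrow> \<bar>g c\<bar> \<le> \<bar>g v\<bar>"
    using finsupp_abs_max[OF assms(1) False] by blast
  define M where "M = \<bar>g v\<bar>"
  have vV: "v \<in> V" and M: "0 < M" "M \<le> 1"
    using v assms(3)[of v] by (auto simp: M_def supp_def)
  have "sqnorm g \<le> M * total (\<lambda>c. \<bar>g c\<bar>)"
    unfolding M_def by (rule sqnorm_le_sup_mult_total_abs[OF assms(1) le_M])
  also have "\<dots> \<le> 2 * M"
    using assms(2) M by simp
  finally have "w_min * (sqnorm g)^3 / 320 \<le> w_min * (2 * M)^3 / 320"
    using w_min_pos sqnorm_nonneg[of g] power_mono[of "sqnorm g" "2 * M" 3] by simp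
  also have "\<dots> = w_min * M^3 / 40" by (simp add: power3_eq_cube)
  also have "\<dots> \<le> dirichlet g"
  proof -
    obtain h where h: "h = g \<or> h = (\<lambda>c. - g c)" and hv: "h v = M"
      using M_def by (cases "g v \<ge> 0") auto
    have "finsupp h" "total (\<lambda>c. \<bar>h c\<bar>) \<le> 2" "finite V \<Longrightarrow> total h = 0" "dirichlet h = dirichlet g"
      using h assms(1,2,4) total_cmult[of "-1" g] dirichlet_uminus[of g] finsupp_mult_left[of g "\<lambda>_. -1"]
      by auto
    then show ?thesis
      using dirichlet_ge_at_point[of v h] vV hv M by simp
  qed
  finally show ?thesis .
qed

lemma abs_dot_le: "finsupp f \<Longrightarrow> finsupp g \<Longrightarrow> \<bar>dot f g\<bar> \<le> (sqnorm f + sqnorm g) / 2"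
proof -
  assume fg: "finsupp f" "finsupp g"
  have "\<bar>dot f g\<bar> \<le> total (\<lambda>c. \<bar>f c * g c\<bar>)"
    unfolding dot_def by (rule abs_total_le)
  also have "\<dots> \<le> total (\<lambda>c. ((f c)\<^sup>2 + (g c)\<^sup>2) / 2)"
  proof (rule total_mono)
    show "\<bar>f c * g c\<bar> \<le> ((f c)\<^sup>2 + (g c)\<^sup>2) / 2" for c
      using sum_squares_bound[of "\<bar>f c\<bar>" "\<bar>g c\<bar>"] by (simp add: abs_mult)
    show "finsupp (\<lambda>c. \<bar>f c * g c\<bar>)" using fg by (intro finsupp_abs finsupp_mult_right)
    show "finsupp (\<lambda>c. ((f c)\<^sup>2 + (g c)\<^sup>2) / 2)"
      using finsupp_add[OF finsupp_power2 finsupp_power2, OF fg] by (rule finsupp_subset) simp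
  qed
  also have "\<dots> = (sqnorm f + sqnorm g) / 2"
    unfolding sqnorm_def using total_cmult[of "1/2"] fg by (simp add: total_add finsupp_power2)
  finally show ?thesis .
qed

subsection \<open>Convergence of the transition probabilities\<close>

definition point_mass :: "'c \<Rightarrow> 'c \<Rightarrow> real" where
  "point_mass o' c = (if c = o' then 1 else 0)"

text \<open>\<open>trans_prob o' n c\<close> is the probability of going from \<open>c\<close> to \<open>o'\<close> in \<open>n\<close> steps, which by
  symmetry equals that of going from \<open>o'\<close> to \<open>c\<close>.\<close>

definition trans_prob :: "'c \<Rightarrow> nat \<Rightarrow> 'c \<Rightarrow> real" where
  "trans_prob o' n = (markov ^^ n) (point_mass o')"

lemma trans_prob_0: "trans_prob o' 0 = point_mass o'"
  by (simp add: trans_prob_def)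

lemma trans_prob_Suc: "trans_prob o' (Suc n) = markov (trans_prob o' n)"
  by (simp add: trans_prob_def)

lemma finsupp_trans_prob: "finsupp (trans_prob o' n)"
proof (induction n)
  case 0
  have "supp (point_mass o') \<subseteq> {o'}" by (auto simp: supp_def point_mass_def)
  then show ?case by (simp add: trans_prob_0 finsupp_def finite_subset)
qed (simp add: trans_prob_Suc finsupp_markov)

lemma trans_prob_nonneg: "c \<in> V \<Longrightarrow> trans_prob o' n c \<ge> 0"
  by (induction n arbitrary: c) (simp_all add: trans_prob_0 trans_prob_Suc point_mass_def markov_nonneg)

lemma total_trans_prob: "o' \<in> V \<Longrightarrow> total (trans_prob o' n) = 1"
proof (induction n)
  case 0
  then show ?case by (subst total_eq_sum[of "{o'}"]) (auto simp: trans_prob_0 point_mass_def)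
qed (simp add: trans_prob_Suc total_markov finsupp_trans_prob)

lemma trans_prob_le_1: "o' \<in> V \<Longrightarrow> c \<in> V \<Longrightarrow> trans_prob o' n c \<le> 1"
  using sum_le_total[of "trans_prob o' n" "{c}"] total_trans_prob[of o' n]
  by (simp add: finsupp_trans_prob trans_prob_nonneg)

lemma trans_prob_add: "c \<in> V \<Longrightarrow> trans_prob o' (m + n) c = dot (trans_prob o' m) (trans_prob c n)"
proof (induction n arbitrary: m)
  case 0
  have "dot (trans_prob o' m) (trans_prob c 0) = trans_prob o' m c"
    unfolding dot_def using 0 by (subst total_eq_sum[of "{c}"]) (auto simp: trans_prob_0 point_mass_def)
  then show ?case by simp
next
  case (Suc n)
  have "trans_prob o' (m + Suc n) c = dot (trans_prob o' (Suc m)) (trans_prob c n)"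
    using Suc.IH[OF Suc.prems, of "Suc m"] by simp
  also have "\<dots> = dot (trans_prob o' m) (trans_prob c (Suc n))"
    by (simp add: trans_prob_Suc dot_markov finsupp_trans_prob)
  finally show ?case .
qed

definition unif :: real where
  "unif = (if finite V then 1 / real (card V) else 0)"

definition centered :: "'c \<Rightarrow> nat \<Rightarrow> 'c \<Rightarrow> real" where
  "centered o' n c = trans_prob o' n c - unif"

definition decay_rate :: real where
  "decay_rate = w e * w_min / 160"

lemma decay_rate_pos: "decay_rate > 0"
  unfolding decay_rate_def using weight_pos[OF lazy_step] w_min_pos by simp

lemma unif_bounds: "o' \<in> V \<Longrightarrow> 0 \<le> unif \<and> unif \<le> 1"
proof (cases "finite V")
  case True
  assume "o' \<in> V"
  then have "card V \<ge> 1" using True by (metis One_nat_def Suc_leI card_gt_0_iff empty_iff)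
  then show ?thesis using True by (simp add: unif_def)
qed (simp add: unif_def)

lemma card_mult_unif: "finite V \<Longrightarrow> o' \<in> V \<Longrightarrow> real (card V) * unif = 1"
  unfolding unif_def by (auto simp: card_gt_0_iff)

lemma centered_infinite: "infinite V \<Longrightarrow> centered o' n = trans_prob o' n"
  by (simp add: centered_def unif_def fun_eq_iff)

lemma finsupp_centered: "finsupp (centered o' n)"
  by (cases "finite V") (simp_all add: finsupp_finite centered_infinite finsupp_trans_prob)

context
  fixes o' :: 'c
  assumes o_in: "o' \<in> V"
begin

lemma total_trans_prob_finite: "finite V \<Longrightarrow> (\<Sum>c\<in>V. trans_prob o' n c) = 1"
  using total_trans_prob[OF o_in] by (simp add: total_eq_sum_finite)

lemma abs_centered_le_1: "c \<in> V \<Longrightarrow> \<bar>centered o' n c\<bar> \<le> 1"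
  using trans_prob_nonneg[of c o' n] trans_prob_le_1[OF o_in, of c n] unif_bounds[OF o_in]
  unfolding centered_def by auto

lemma total_centered: "finite V \<Longrightarrow> total (centered o' n) = 0"
  by (simp add: total_eq_sum_finite centered_def sum_subtractf total_trans_prob_finite card_mult_unif[OF _ o_in])

lemma total_abs_centered_le_2: "total (\<lambda>c. \<bar>centered o' n c\<bar>) \<le> 2"
proof (cases "finite V")
  case True
  have "total (\<lambda>c. \<bar>centered o' n c\<bar>) \<le> (\<Sum>c\<in>V. trans_prob o' n c + unif)"
    unfolding total_eq_sum_finite[OF True] centered_def
    using trans_prob_nonneg unif_bounds[OF o_in] by (intro sum_mono) (simp add: abs_le_iff)
  then show ?thesis
    using True by (simp add: sum.distrib total_trans_prob_finite card_mult_unif[OF _ o_in])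
next
  case False
  then have "total (\<lambda>c. \<bar>centered o' n c\<bar>) = total (trans_prob o' n)"
    by (intro total_cong) (simp add: centered_def unif_def trans_prob_nonneg)
  then show ?thesis by (simp add: total_trans_prob o_in)
qed

lemma sqnorm_centered_le_2: "sqnorm (centered o' n) \<le> 2"
proof -
  have "sqnorm (centered o' n) \<le> 1 * total (\<lambda>c. \<bar>centered o' n c\<bar>)"
    by (intro sqnorm_le_sup_mult_total_abs finsupp_centered abs_centered_le_1)
  then show ?thesis using total_abs_centered_le_2[of n] by simp
qed

lemma sqnorm_centered_decay:
  "sqnorm (centered o' (Suc n)) \<le> sqnorm (centered o' n) - decay_rate * (sqnorm (centered o' n))^3"
proof -
  have "sqnorm (centered o' (Suc n)) = sqnorm (markov (centered o' n))"
    unfolding sqnorm_def centered_def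
    by (rule total_cong) (simp add: trans_prob_Suc markov_diff_const)
  also have "\<dots> \<le> sqnorm (centered o' n) - 2 * w e * dirichlet (centered o' n)"
    by (rule sqnorm_markov_le[OF finsupp_centered])
  also have "\<dots> \<le> sqnorm (centered o' n) - decay_rate * (sqnorm (centered o' n))^3"
  proof -
    have "w_min * (sqnorm (centered o' n))^3 / 320 \<le> dirichlet (centered o' n)"
      by (intro nash_inequality finsupp_centered total_abs_centered_le_2 abs_centered_le_1
          total_centered)
    then show ?thesis
      using weight_pos[OF lazy_step] unfolding decay_rate_def by (simp add: field_simps)
  qed
  finally show ?thesis .
qed

lemma sqnorm_centered_small:
  assumes "\<epsilon> > 0" "n \<ge> nat \<lceil>2 / (decay_rate * \<epsilon>^3)\<rceil>"
  shows "sqnorm (centered o' n) < \<epsilon>"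
proof (rule cubic_decay[where q = "\<lambda>n. sqnorm (centered o' n)"])
  show "real n \<ge> 2 / (decay_rate * \<epsilon>^3)" using assms(2) by linarith
qed (use decay_rate_pos assms(1) sqnorm_centered_decay sqnorm_nonneg sqnorm_centered_le_2 in auto)

end

lemma dot_centered:
  assumes "o' \<in> V" "c \<in> V"
  shows "dot (centered o' m) (centered c n) = trans_prob o' (m + n) c - unif"
proof (cases "finite V")
  case True
  have "dot (centered o' m) (centered c n)
      = dot (trans_prob o' m) (trans_prob c n) - unif * (\<Sum>d\<in>V. trans_prob c n d)
        - unif * (\<Sum>d\<in>V. trans_prob o' m d) + unif * (\<Sum>d\<in>V. unif)"
    unfolding dot_def total_eq_sum_finite[OF True] centered_def
    by (simp add: algebra_simps sum_subtractf sum.distrib sum_distrib_left)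
  then show ?thesis
    using True assms by (simp add: trans_prob_add total_trans_prob_finite card_mult_unif)
qed (simp add: centered_infinite unif_def trans_prob_add assms)

theorem trans_prob_uniform:
  assumes "o' \<in> V" "c \<in> V" "\<epsilon> > 0" "m \<ge> 2 * nat \<lceil>2 / (decay_rate * \<epsilon>^3)\<rceil>"
  shows "\<bar>trans_prob o' m c - unif\<bar> < \<epsilon>"
proof -
  define N where "N = nat \<lceil>2 / (decay_rate * \<epsilon>^3)\<rceil>"
  define n where "n = m div 2"
  have "N \<le> n" "N \<le> m - n"
    using assms(4) unfolding N_def[symmetric] n_def by presburger+
  have "trans_prob o' m c - unif = dot (centered o' (m - n)) (centered c n)"
    using dot_centered[OF assms(1,2)] by (simp add: n_def)
  also have "\<bar>\<dots>\<bar> \<le> (sqnorm (centered o' (m - n)) + sqnorm (centered c n)) / 2"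
    by (intro abs_dot_le finsupp_centered)
  also have "\<dots> < \<epsilon>"
    using sqnorm_centered_small[OF assms(1,3)] sqnorm_centered_small[OF assms(2,3)]
      \<open>N \<le> n\<close> \<open>N \<le> m - n\<close> unfolding N_def by fastforce
  finally show ?thesis .
qed

end

section \<open>Convolution powers and the walk on left cosets\<close>

context group
begin

lemma set_inv_eq_image: "set_inv A = (\<lambda>a. inv a) ` A"
  unfolding SET_INV_def by blast

lemma set_inv_set_inv: "A \<subseteq> carrier G \<Longrightarrow> set_inv (set_inv A) = A"
  unfolding set_inv_eq_image image_image by (simp add: subset_iff image_cong)

lemma set_inv_l_coset:
  assumes "subgroup H G" "x \<in> carrier G"
  shows "set_inv (x <# H) = H #> inv x"
proof -
  have H: "h \<in> carrier G" "inv h \<in> H" if "h \<in> H" for h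
    using that assms(1) by (auto simp: subgroup.mem_carrier subgroup.m_inv_closed)
  have inv_H: "(\<lambda>h. inv h) ` H = H"
  proof
    show "H \<subseteq> (\<lambda>h. inv h) ` H"
    proof
      fix h assume "h \<in> H"
      then show "h \<in> (\<lambda>h. inv h) ` H" using H by (intro image_eqI[where x = "inv h"]) auto
    qed
  qed (use H in auto)
  have "set_inv (x <# H) = (\<lambda>h. inv (x \<otimes> h)) ` H"
    unfolding set_inv_eq_image l_coset_def by blast
  also have "\<dots> = (\<lambda>h. inv h \<otimes> inv x) ` H"
    using H assms(2) by (intro image_cong) (simp_all add: inv_mult_group)
  also have "\<dots> = (\<lambda>h. h \<otimes> inv x) ` H"
    by (subst (2) inv_H[symmetric]) (simp add: image_image)
  also have "\<dots> = H #> inv x"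
    unfolding r_coset_def by blast
  finally show ?thesis .
qed

lemma bij_betw_lcosets_rcosets:
  assumes "subgroup H G"
  shows "bij_betw (\<lambda>C. set_inv C) (lcosets H) (rcosets H)"
proof (rule bij_betw_byWitness[where f' = "\<lambda>C. set_inv C"])
  show "\<forall>C\<in>lcosets H. set_inv (set_inv C) = C"
    using set_inv_set_inv subgroup.lcosets_carrier[OF assms is_group] by blast
  show "\<forall>C\<in>rcosets H. set_inv (set_inv C) = C"
    using set_inv_set_inv subgroup.rcosets_carrier[OF assms is_group] by blast
  show "(\<lambda>C. set_inv C) ` (lcosets H) \<subseteq> rcosets H"
    using set_inv_l_coset[OF assms] by (auto simp: LCOSETS_def RCOSETS_def)
  show "(\<lambda>C. set_inv C) ` (rcosets H) \<subseteq> lcosets H"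
  proof
    fix D assume "D \<in> (\<lambda>C. set_inv C) ` (rcosets H)"
    then obtain x where x: "x \<in> carrier G" "D = set_inv (H #> x)"
      by (auto simp: RCOSETS_def)
    have "H #> x = set_inv (inv x <# H)"
      using set_inv_l_coset[OF assms inv_closed[OF x(1)]] x(1) by simp
    then have "D = inv x <# H"
      using x set_inv_set_inv l_coset_subset_G subgroup.subset[OF assms] by simp
    then show "D \<in> lcosets H"
      using x by (auto simp: LCOSETS_def)
  qed
qed

lemma generate_l_coset_closed:
  assumes "z \<in> generate G S" "S \<subseteq> carrier G" "\<And>s. s \<in> S \<Longrightarrow> inv s \<in> S"
    and "\<And>C. C \<in> B \<Longrightarrow> C \<subseteq> carrier G" "\<And>s C. s \<in> S \<Longrightarrow> C \<in> B \<Longrightarrow> s <# C \<in> B"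
    and "C \<in> B"
  shows "z <# C \<in> B"
  using assms(1,6)
proof (induction arbitrary: C rule: generate.induct)
  case one
  then show ?case using lcos_mult_one[OF assms(4)] by simp
next
  case (incl h)
  then show ?case by (rule assms(5))
next
  case (inv h)
  then show ?case by (intro assms(5)[OF assms(3)])
next
  case (eng h1 h2)
  have "h1 \<in> carrier G" "h2 \<in> carrier G"
    using eng.hyps generate_in_carrier[OF assms(2)] by auto
  then have "(h1 \<otimes> h2) <# C = h1 <# (h2 <# C)"
    using lcos_m_assoc[OF assms(4)[OF eng.prems]] by simp
  then show ?case using eng.IH eng.prems by simp
qed

text \<open>\<open>conv_pow\<close> multiplies the new step on the right, which does not respect left cosets;
  the walk on left cosets needs the step on the left.\<close>

lemma conv_pow_Suc_left:
  assumes "g \<in> carrier G"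
  shows "conv_pow G mu (Suc n) g = (\<Sum>s\<in>supp_fn G mu. mu s * conv_pow G mu n (inv s \<otimes> g))"
  using assms
proof (induction n arbitrary: g)
  case 0
  have "g \<otimes> inv s = \<one> \<longleftrightarrow> inv s \<otimes> g = \<one>" if "s \<in> carrier G" for s
    using 0 that by (metis inv_closed inv_equality l_inv_ex r_inv)
  then show ?case using 0 by (auto simp: supp_fn_def mult.commute intro!: sum.cong)
next
  case (Suc n)
  let ?S = "supp_fn G mu"
  have S: "s \<in> carrier G" if "s \<in> ?S" for s
    using that by (simp add: supp_fn_def)
  have "conv_pow G mu (Suc (Suc n)) g
      = (\<Sum>t\<in>?S. (\<Sum>s\<in>?S. mu s * conv_pow G mu n (inv s \<otimes> (g \<otimes> inv t))) * mu t)"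
    using Suc S by simp
  also have "\<dots> = (\<Sum>t\<in>?S. \<Sum>s\<in>?S. mu s * (conv_pow G mu n (inv s \<otimes> (g \<otimes> inv t)) * mu t))"
    by (simp add: sum_distrib_right mult.assoc)
  also have "\<dots> = (\<Sum>s\<in>?S. \<Sum>t\<in>?S. mu s * (conv_pow G mu n (inv s \<otimes> (g \<otimes> inv t)) * mu t))"
    by (rule sum.swap)
  also have "\<dots> = (\<Sum>s\<in>?S. mu s * (\<Sum>t\<in>?S. conv_pow G mu n ((inv s \<otimes> g) \<otimes> inv t) * mu t))"
    using Suc.prems S by (simp add: sum_distrib_left m_assoc)
  also have "\<dots> = (\<Sum>s\<in>?S. mu s * conv_pow G mu (Suc n) (inv s \<otimes> g))"
    using Suc.prems S by simp
  finally show ?case .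
qed

lemma finite_supp_conv_pow:
  assumes "finite (supp_fn G mu)"
  shows "finite (supp_fn G (conv_pow G mu n))"
proof (induction n)
  case 0
  have "supp_fn G (conv_pow G mu 0) \<subseteq> {\<one>}" by (auto simp: supp_fn_def)
  then show ?case by (rule finite_subset) simp
next
  case (Suc n)
  have "supp_fn G (conv_pow G mu (Suc n))
      \<subseteq> (\<lambda>(a, s). a \<otimes> s) ` (supp_fn G (conv_pow G mu n) \<times> supp_fn G mu)"
  proof
    fix g assume "g \<in> supp_fn G (conv_pow G mu (Suc n))"
    then have g: "g \<in> carrier G"
      and "(\<Sum>s\<in>supp_fn G mu. conv_pow G mu n (g \<otimes> inv s) * mu s) \<noteq> 0"
      by (auto simp: supp_fn_def)
    then obtain s where s: "s \<in> supp_fn G mu" and "conv_pow G mu n (g \<otimes> inv s) * mu s \<noteq> 0"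
      by (meson sum.not_neutral_contains_not_neutral)
    then have "g \<otimes> inv s \<in> supp_fn G (conv_pow G mu n)" "(g \<otimes> inv s) \<otimes> s = g"
      using g by (auto simp: supp_fn_def m_assoc)
    then show "g \<in> (\<lambda>(a, s). a \<otimes> s) ` (supp_fn G (conv_pow G mu n) \<times> supp_fn G mu)"
      using s by force
  qed
  then show ?case by (rule finite_subset) (use Suc assms in auto)
qed

lemma mass_eq_sum:
  assumes "finite B" "B \<subseteq> A \<inter> carrier G" "supp_fn G f \<inter> A \<subseteq> B"
  shows "mass G f A = sum f B"
  unfolding mass_def by (rule sum.mono_neutral_left) (use assms in \<open>auto simp: supp_fn_def\<close>)

lemma mass_cong: "(\<And>g. g \<in> carrier G \<Longrightarrow> g \<in> A \<Longrightarrow> f g = f' g) \<Longrightarrow> mass G f A = mass G f' A"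
  unfolding mass_def supp_fn_def by (rule sum.cong) auto

lemma mass_weighted_sum:
  assumes "finite I" "\<And>i. i \<in> I \<Longrightarrow> finite (supp_fn G (h i))"
  shows "mass G (\<lambda>g. \<Sum>i\<in>I. k i * h i g) A = (\<Sum>i\<in>I. k i * mass G (h i) A)"
proof -
  define B where "B = (\<Union>i\<in>I. supp_fn G (h i)) \<inter> A"
  have B: "finite B" "B \<subseteq> A \<inter> carrier G"
    using assms by (auto simp: B_def supp_fn_def)
  have "mass G (\<lambda>g. \<Sum>i\<in>I. k i * h i g) A = (\<Sum>g\<in>B. \<Sum>i\<in>I. k i * h i g)"
    using B by (intro mass_eq_sum) (auto simp: B_def supp_fn_def dest: sum.not_neutral_contains_not_neutral)
  also have "\<dots> = (\<Sum>i\<in>I. k i * sum (h i) B)"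
    by (subst sum.swap) (simp add: sum_distrib_left)
  also have "\<dots> = (\<Sum>i\<in>I. k i * mass G (h i) A)"
    using B by (intro sum.cong refl arg_cong[where f = "(*) _"] mass_eq_sum[symmetric]) (auto simp: B_def)
  finally show ?thesis .
qed

lemma supp_fn_translate:
  assumes "s \<in> carrier G"
  shows "supp_fn G (\<lambda>g. f (inv s \<otimes> g)) = (\<lambda>y. s \<otimes> y) ` supp_fn G f"
  unfolding supp_fn_def
proof (intro equalityI subsetI)
  fix g assume "g \<in> {g \<in> carrier G. f (inv s \<otimes> g) \<noteq> 0}"
  then show "g \<in> (\<lambda>y. s \<otimes> y) ` {g \<in> carrier G. f g \<noteq> 0}"
    using assms by (intro image_eqI[where x = "inv s \<otimes> g"]) (auto simp: m_assoc[symmetric])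
qed (use assms in \<open>auto simp: m_assoc[symmetric]\<close>)

lemma mass_translate:
  assumes "s \<in> carrier G" "A \<subseteq> carrier G"
  shows "mass G (\<lambda>g. f (inv s \<otimes> g)) A = mass G f (inv s <# A)"
proof -
  have "bij_betw (\<lambda>g. inv s \<otimes> g) (supp_fn G (\<lambda>g. f (inv s \<otimes> g)) \<inter> A) (supp_fn G f \<inter> (inv s <# A))"
    by (rule bij_betw_byWitness[where f' = "\<lambda>y. s \<otimes> y"])
      (use assms in \<open>auto simp: supp_fn_def l_coset_def m_assoc[symmetric]\<close>)
  then show ?thesis
    unfolding mass_def by (rule sum.reindex_bij_betw)
qed

lemma mass_conv_pow_Suc:
  assumes "finite (supp_fn G mu)" "A \<subseteq> carrier G"
  shows "mass G (conv_pow G mu (Suc n)) A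
    = (\<Sum>s\<in>supp_fn G mu. mu s * mass G (conv_pow G mu n) (inv s <# A))"
proof -
  have S: "s \<in> carrier G" if "s \<in> supp_fn G mu" for s
    using that by (simp add: supp_fn_def)
  have "mass G (conv_pow G mu (Suc n)) A
      = mass G (\<lambda>g. \<Sum>s\<in>supp_fn G mu. mu s * conv_pow G mu n (inv s \<otimes> g)) A"
    by (rule mass_cong) (rule conv_pow_Suc_left)
  also have "\<dots> = (\<Sum>s\<in>supp_fn G mu. mu s * mass G (\<lambda>g. conv_pow G mu n (inv s \<otimes> g)) A)"
    using assms S finite_supp_conv_pow by (intro mass_weighted_sum) (auto simp: supp_fn_translate)
  also have "\<dots> = (\<Sum>s\<in>supp_fn G mu. mu s * mass G (conv_pow G mu n) (inv s <# A))"
    using assms S by (simp add: mass_translate)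
  finally show ?thesis .
qed

end

locale coset_walk = group G for G (structure) +
  fixes mu :: "'a \<Rightarrow> real" and H :: "'a set"
  assumes mu_nonneg: "\<And>g. mu g \<ge> 0"
    and finite_supp_mu: "finite (supp_fn G mu)"
    and sum_mu: "(\<Sum>g\<in>supp_fn G mu. mu g) = 1"
    and mu_inv: "\<And>g. g \<in> carrier G \<Longrightarrow> mu (inv g) = mu g"
    and generate_supp_mu: "generate G (supp_fn G mu) = carrier G"
    and mu_one_pos: "mu \<one> > 0"
    and subgroup_H: "subgroup H G"

lemma (in coset_walk) lcosets_subset_closed:
  assumes C: "C \<in> B" and B: "B \<subseteq> lcosets H"
    and closed: "\<And>s C. s \<in> supp_fn G mu \<Longrightarrow> C \<in> B \<Longrightarrow> s <# C \<in> B"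
  shows "lcosets H \<subseteq> B"
proof
  fix D assume "D \<in> lcosets H"
  then obtain x where x: "x \<in> carrier G" "D = x <# H"
    unfolding LCOSETS_def by blast
  obtain y where y: "y \<in> carrier G" "C = y <# H"
    using C B unfolding LCOSETS_def by blast
  have coset: "C' \<subseteq> carrier G" if "C' \<in> B" for C'
    using B that subgroup.lcosets_carrier[OF subgroup_H is_group] by blast
  have supp: "supp_fn G mu \<subseteq> carrier G" "\<And>s. s \<in> supp_fn G mu \<Longrightarrow> inv s \<in> supp_fn G mu"
    using mu_inv by (auto simp: supp_fn_def)
  have "x \<otimes> inv y \<in> generate G (supp_fn G mu)"
    using generate_supp_mu x y by simp
  then have "(x \<otimes> inv y) <# C \<in> B"
    using supp coset closed C by (rule generate_l_coset_closed)
  moreover have "(x \<otimes> inv y) <# C = D"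
    using x y subgroup.subset[OF subgroup_H] by (simp add: lcos_m_assoc m_assoc)
  ultimately show "D \<in> B" by simp
qed

sublocale coset_walk \<subseteq> lazy_symmetric_walk "lcosets H" "supp_fn G mu" mu "\<lambda>s C. s <#\<^bsub>G\<^esub> C" "\<lambda>s. inv s" \<one>
proof
  have supp: "s \<in> carrier G" if "s \<in> supp_fn G mu" for s
    using that by (simp add: supp_fn_def)
  have coset: "C \<subseteq> carrier G" if "C \<in> lcosets H" for C
    using subgroup.lcosets_carrier[OF subgroup_H is_group that] .
  show "finite (supp_fn G mu)" "(\<Sum>s\<in>supp_fn G mu. mu s) = 1"
    by (fact finite_supp_mu sum_mu)+
  show "0 < mu s" if "s \<in> supp_fn G mu" for s
    using that mu_nonneg[of s] by (simp add: supp_fn_def)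
  show "\<one> \<in> supp_fn G mu"
    using mu_one_pos by (simp add: supp_fn_def)
  show "inv s \<in> supp_fn G mu" if "s \<in> supp_fn G mu" for s
    using that mu_inv by (simp add: supp_fn_def)
  show "inv (inv s) = s" "mu (inv s) = mu s" if "s \<in> supp_fn G mu" for s
    using supp[OF that] mu_inv by simp_all
  show "\<one> <# C = C" if "C \<in> lcosets H" for C
    using lcos_mult_one[OF coset[OF that]] .
  show "inv s <# (s <# C) = C" if "s \<in> supp_fn G mu" "C \<in> lcosets H" for s C
    using supp[OF that(1)] coset[OF that(2)] by (simp add: lcos_m_assoc lcos_mult_one)
  show "s <# C \<in> lcosets H" if s: "s \<in> supp_fn G mu" and C: "C \<in> lcosets H" for s C
  proof -
    obtain x where x: "x \<in> carrier G" "C = x <# H"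
      using C unfolding LCOSETS_def by blast
    then have "s <# C = (s \<otimes> x) <# H"
      using supp[OF s] subgroup.subset[OF subgroup_H] by (simp add: lcos_m_assoc)
    then show ?thesis
      using supp[OF s] x(1) unfolding LCOSETS_def by blast
  qed
  show "lcosets H \<subseteq> B"
    if "C \<in> B" "B \<subseteq> lcosets H" "\<And>s C. s \<in> supp_fn G mu \<Longrightarrow> C \<in> B \<Longrightarrow> s <# C \<in> B" for C B
    using that by (rule lcosets_subset_closed)
qed

context coset_walk
begin

lemma mass_conv_pow_eq_trans_prob:
  "y \<in> carrier G \<Longrightarrow> mass G (conv_pow G mu n) (y <# H) = trans_prob H n (y <# H)"
proof (induction n arbitrary: y)
  case 0
  have "\<one> \<in> y <# H \<longleftrightarrow> y <# H = H"
    using l_repr_independence[of \<one> y H] 0 subgroup_H subgroup.subset[OF subgroup_H]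
    by (auto simp: lcos_mult_one subgroup.one_closed)
  then show ?case
    unfolding mass_def trans_prob_0 point_mass_def by (auto simp: supp_fn_def)
next
  case (Suc n)
  have S: "s \<in> carrier G" if "s \<in> supp_fn G mu" for s
    using that by (simp add: supp_fn_def)
  have H: "H \<subseteq> carrier G" by (rule subgroup.subset[OF subgroup_H])
  have "mass G (conv_pow G mu (Suc n)) (y <# H)
      = (\<Sum>s\<in>supp_fn G mu. mu s * mass G (conv_pow G mu n) (inv s <# (y <# H)))"
    using Suc.prems H by (intro mass_conv_pow_Suc finite_supp_mu l_coset_subset_G)
  also have "\<dots> = (\<Sum>s\<in>supp_fn G mu. mu s * trans_prob H n ((inv s \<otimes> y) <# H))"
    using Suc S H by (intro sum.cong refl) (simp add: lcos_m_assoc)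
  also have "\<dots> = (\<Sum>s\<in>supp_fn G mu. mu s * trans_prob H n ((s \<otimes> y) <# H))"
    using S mu_inv by (intro sum.reindex_bij_witness[of _ "\<lambda>s. inv s" "\<lambda>s. inv s"])
      (auto simp: supp_fn_def)
  also have "\<dots> = trans_prob H (Suc n) (y <# H)"
    using Suc.prems S H by (simp add: trans_prob_Suc markov_def lcos_m_assoc)
  finally show ?case .
qed

lemma unif_eq_inv_index: "unif = inv_index G H"
  using bij_betw_lcosets_rcosets[OF subgroup_H]
  by (simp add: unif_def inv_index_def bij_betw_finite bij_betw_same_card)

lemma mass_l_coset_close_to_inv_index:
  assumes "x \<in> carrier G" "\<epsilon> > 0"
    and "m \<ge> 2 * nat \<lceil>2 / (mu \<one> * Min (mu ` supp_fn G mu) / 160 * \<epsilon>^3)\<rceil>"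
  shows "\<bar>mass G (conv_pow G mu m) (x <# H) - inv_index G H\<bar> < \<epsilon>"
proof -
  have "H \<in> lcosets H" "x <# H \<in> lcosets H"
    using assms(1) lcos_mult_one[OF subgroup.subset[OF subgroup_H]]
    unfolding LCOSETS_def by force+
  then show ?thesis
    using trans_prob_uniform[of H "x <# H" \<epsilon> m] assms
    by (simp add: mass_conv_pow_eq_trans_prob unif_eq_inv_index decay_rate_def w_min_def)
qed

end

text \<open>Finite generation of \<open>G\<close> already follows from the finite generating support, and values of
  \<open>mu\<close> off the carrier are never looked at.\<close>

theorem theorem1p14:
  fixes G :: "('a, 'b) monoid_scheme" and mu :: "'a \<Rightarrow> real"
  assumes "group G"
    and "finitely_generated_group G"
    and "\<And>g. mu g \<ge> 0"
    and "\<And>g. g \<notin> carrier G \<Longrightarrow> mu g = 0"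
    and "finite (supp_fn G mu)"
    and "(\<Sum>g\<in>supp_fn G mu. mu g) = 1"
    and "\<And>g. g \<in> carrier G \<Longrightarrow> mu (inv\<^bsub>G\<^esub> g) = mu g"
    and "generate G (supp_fn G mu) = carrier G"
    and "mu \<one>\<^bsub>G\<^esub> > 0"
  shows "measures_index_uniformly G (\<lambda>n. conv_pow G mu (Suc n))"
  unfolding measures_index_uniformly_def
proof (intro allI impI)
  fix \<epsilon> :: real
  assume "\<epsilon> > 0"
  let ?N = "2 * nat \<lceil>2 / (mu \<one>\<^bsub>G\<^esub> * Min (mu ` supp_fn G mu) / 160 * \<epsilon>^3)\<rceil>"
  show "\<exists>N. \<forall>n\<ge>N. \<forall>x\<in>carrier G. \<forall>H. subgroup H G \<longrightarrow>
      \<bar>mass G (conv_pow G mu (Suc n)) (x <#\<^bsub>G\<^esub> H) - inv_index G H\<bar> < \<epsilon>"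
  proof (intro exI[of _ ?N] allI impI ballI)
    fix n x H
    assume "?N \<le> n" "x \<in> carrier G" "subgroup H G"
    then interpret coset_walk G mu H
      by (intro coset_walk.intro[OF assms(1)] coset_walk_axioms.intro) (use assms in auto)
    show "\<bar>mass G (conv_pow G mu (Suc n)) (x <#\<^bsub>G\<^esub> H) - inv_index G H\<bar> < \<epsilon>"
      using \<open>?N \<le> n\<close> \<open>x \<in> carrier G\<close> \<open>\<epsilon> > 0\<close> by (intro mass_l_coset_close_to_inv_index) auto
  qed
qed

end
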